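(* Let $n\ge1$ and $k=2$. For a general parameter $((\mu_1,\mu_2),(\lambda_1,\lambda_2),\Sigma)\in\Theta^H_{n,2}$ with $\lambda_1,\lambda_2\in(0,1)$, any parameter $((\mu_1',\mu_2'),(\lambda_1',\lambda_2'),\Sigma')\in\Theta^H_{n,2}$ with $\lambda_1',\lambda_2'\in(0,1)$ and the same moments up to order $4$ (i.e. $M_{n,2,4}$ takes the same value on both) coincides with the original one up to exchanging $(\mu_1,\lambda_1)$ and $(\mu_2,\lambda_2)$. That is, the statistically meaningful mixture parameters are recovered uniquely from moments up to order $4$.
   Context: $\Theta^H_{n,2}=\{((\mu_1,\mu_2),(\lambda_1,\lambda_2),\Sigma):\mu_i\in\mathbb{R}^n,\ \lambda_i\in\mathbb{R},\ \lambda_1+\lambda_2=1,\ \Sigma\in\mathbb{R}^{n\times n}\text{ symmetric}\}$. With $u=(u_1,\dots,u_n)$, the map $M_{n,2,4}$ sends a parameter to the coefficient vector $(m_a)_{1\le|a|\le 4}$ of the truncation modulo $(u)^{5}$ of $\sum_{i=1}^2\lambda_i\exp(u^t\mu_i+\tfrac12u^t\Sigma u)=\sum_a m_a u^a/a!$, i.e. the moments of order $\le4$ of the mixture $\lambda_1\mathcal N(\mu_1,\Sigma)+\lambda_2\mathcal N(\mu_2,\Sigma)$. *)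

theory Defs
  imports "HOL-Analysis.Analysis"
begin

text \<open>A parameter ((mu1,mu2),(lambda1,lambda2),Sigma) of Theta^H_{n,2}.
  The dimension n is the cardinality of the finite index type 'n.\<close>
type_synonym 'n param = "((real^'n) \<times> (real^'n)) \<times> (real \<times> real) \<times> (real^'n^'n)"

definition ThetaH :: "('n::finite) param set" where
  "ThetaH = {((m1, m2), (l1, l2), S). l1 + l2 = 1 \<and> transpose S = S}"

definition weights_in_01 :: "('n::finite) param \<Rightarrow> bool" where
  "weights_in_01 \<theta> = (case \<theta> of ((m1, m2), (l1, l2), S) \<Rightarrow>
      0 < l1 \<and> l1 < 1 \<and> 0 < l2 \<and> l2 < 1)"

definition swap_param :: "('n::finite) param \<Rightarrow> 'n param" where
  "swap_param \<theta> = (case \<theta> of ((m1, m2), (l1, l2), S) \<Rightarrow> ((m2, m1), (l2, l1), S))"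

definition mgf :: "('n::finite) param \<Rightarrow> real^'n \<Rightarrow> real" where
  "mgf \<theta> u = (case \<theta> of ((m1, m2), (l1, l2), S) \<Rightarrow>
      l1 * exp (u \<bullet> m1 + (1/2) * (u \<bullet> (S *v u)))
    + l2 * exp (u \<bullet> m2 + (1/2) * (u \<bullet> (S *v u))))"

fun pd :: "('n::finite) list \<Rightarrow> (real^'n \<Rightarrow> real) \<Rightarrow> real^'n \<Rightarrow> real" where
  "pd [] F u = F u"
| "pd (j # js) F u = deriv (\<lambda>t. pd js F (u + t *\<^sub>R axis j 1)) 0"

text \<open>The moment map M_{n,2,4}: the moment m_a (a multi-index, 1 <= |a| <= 4) is the
  coefficient a! * [u^a] of the Taylor expansion, i.e. the partial derivative
  d^a of the mgf at u = 0.  A multi-index is encoded by any list of coordinate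
  indices containing j exactly a_j times (mixed partials commute).\<close>
definition M4 :: "('n::finite) param \<Rightarrow> 'n list \<Rightarrow> real" where
  "M4 \<theta> js = (if 1 \<le> length js \<and> length js \<le> 4 then pd js (mgf \<theta>) 0 else 0)"

inductive_set param_polys :: "(('n::finite) param \<Rightarrow> real) set" where
  pconst: "(\<lambda>\<theta>. c) \<in> param_polys"
| pmu1: "(\<lambda>\<theta>. fst (fst \<theta>) $ j) \<in> param_polys"
| pmu2: "(\<lambda>\<theta>. snd (fst \<theta>) $ j) \<in> param_polys"
| plam1: "(\<lambda>\<theta>. fst (fst (snd \<theta>))) \<in> param_polys"
| plam2: "(\<lambda>\<theta>. snd (fst (snd \<theta>))) \<in> param_polys"
| psig: "(\<lambda>\<theta>. snd (snd \<theta>) $ i $ j) \<in> param_polys"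
| padd: "p \<in> param_polys \<Longrightarrow> q \<in> param_polys \<Longrightarrow> (\<lambda>\<theta>. p \<theta> + q \<theta>) \<in> param_polys"
| pmult: "p \<in> param_polys \<Longrightarrow> q \<in> param_polys \<Longrightarrow> (\<lambda>\<theta>. p \<theta> * q \<theta>) \<in> param_polys"

end

theory Submission
  imports Defs
begin

text \<open>A mixture with common covariance is the law of \<open>\<mu>\<^sub>2 + B d + Z\<close> with \<open>d = \<mu>\<^sub>1 - \<mu>\<^sub>2\<close>,
  \<open>B\<close> Bernoulli(\<open>\<lambda>\<^sub>1\<close>) and \<open>Z \<sim> N(0, \<Sigma>)\<close> independent. Hence its covariance is
  \<open>\<Sigma> + \<lambda>\<^sub>1\<lambda>\<^sub>2 d d\<^sup>T\<close>, and its cumulants of order 3 and 4 are those of \<open>B\<close> times products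
  of entries of \<open>d\<close>. In a coordinate \<open>a\<close> with \<open>\<lambda>\<^sub>1 \<noteq> \<lambda>\<^sub>2\<close> and \<open>d\<^sub>a \<noteq> 0\<close>, the marginal
  cumulants \<open>\<kappa>\<^sub>3 = \<lambda>\<^sub>1\<lambda>\<^sub>2(\<lambda>\<^sub>2-\<lambda>\<^sub>1)d\<^sub>a\<^sup>3\<close> and \<open>\<kappa>\<^sub>4 = \<lambda>\<^sub>1\<lambda>\<^sub>2(1-6\<lambda>\<^sub>1\<lambda>\<^sub>2)d\<^sub>a\<^sup>4\<close> determine
  \<open>y = 3(\<lambda>\<^sub>2-\<lambda>\<^sub>1)\<^sup>2 - 1\<close> through \<open>27\<kappa>\<^sub>3\<^sup>4 y\<^sup>3 = 2\<kappa>\<^sub>4\<^sup>3 (2-y)(1+y)\<^sup>2\<close>, because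
  \<open>y\<^sup>3/((2-y)(1+y)\<^sup>2)\<close> is injective on \<open>(-1, 2)\<close>. This fixes \<open>\<lambda>\<^sub>1\<lambda>\<^sub>2\<close>, and then \<open>\<kappa>\<^sub>3\<close>
  fixes \<open>(\<lambda>\<^sub>2-\<lambda>\<^sub>1, d\<^sub>a)\<close> up to a common sign, i.e. up to the label swap. The mixed cumulants
  \<open>\<kappa>(a,a,j)\<close> then give \<open>d\<close>, the means give \<open>\<mu>\<^sub>1, \<mu>\<^sub>2\<close> and the covariances give \<open>\<Sigma>\<close>.\<close>

definition partial_deriv :: "'n::finite \<Rightarrow> (real^'n \<Rightarrow> real) \<Rightarrow> real^'n \<Rightarrow> real" where
  "partial_deriv j F u = deriv (\<lambda>t. F (u + t *\<^sub>R axis j 1)) 0"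

lemma pd_Cons_partial_deriv: "pd (j # js) F u = partial_deriv j (\<lambda>v. pd js F v) u"
  by (simp add: partial_deriv_def)

lemma partial_deriv_eq_derivative:
  assumes "(F has_derivative F') (at u)"
  shows "partial_deriv j F u = F' (axis j 1)"
proof -
  let ?e = "axis j 1"
  have "((\<lambda>t. u + t *\<^sub>R ?e) has_derivative (\<lambda>t. t *\<^sub>R ?e)) (at 0)"
    by (auto intro!: derivative_eq_intros)
  moreover have "(F has_derivative F') (at (u + 0 *\<^sub>R ?e))"
    using assms by simp
  ultimately have "((\<lambda>t. F (u + t *\<^sub>R ?e)) has_derivative (\<lambda>t. F' (t *\<^sub>R ?e))) (at 0)"
    using has_derivative_compose by (fastforce simp: o_def)
  moreover have "(\<lambda>t. F' (t *\<^sub>R ?e)) = (\<lambda>t. t * F' ?e)"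
    using has_derivative_linear[OF assms] by (simp add: linear_scale)
  ultimately have "((\<lambda>t. F (u + t *\<^sub>R ?e)) has_real_derivative F' ?e) (at 0)"
    by (simp add: has_field_derivative_def mult.commute[of _ "F' _"] cong: rev_conj_cong)
  then show ?thesis
    unfolding partial_deriv_def by (rule DERIV_imp_deriv)
qed

lemma partial_deriv_const [simp]: "partial_deriv j (\<lambda>u. c) u = 0"
  by (rule partial_deriv_eq_derivative) (rule has_derivative_const)

lemma partial_deriv_add [simp]:
  assumes "F differentiable at u" "G differentiable at u"
  shows "partial_deriv j (\<lambda>u. F u + G u) u = partial_deriv j F u + partial_deriv j G u"
proof -
  obtain F' G' where F: "(F has_derivative F') (at u)" and G: "(G has_derivative G') (at u)"
    using assms by (auto simp: differentiable_def)
  show ?thesis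
    using partial_deriv_eq_derivative[OF has_derivative_add[OF F G]]
    by (simp add: partial_deriv_eq_derivative[OF F] partial_deriv_eq_derivative[OF G])
qed

lemma partial_deriv_mult [simp]:
  assumes "F differentiable at u" "G differentiable at u"
  shows "partial_deriv j (\<lambda>u. F u * G u) u = partial_deriv j F u * G u + F u * partial_deriv j G u"
proof -
  obtain F' G' where F: "(F has_derivative F') (at u)" and G: "(G has_derivative G') (at u)"
    using assms by (auto simp: differentiable_def)
  show ?thesis
    using partial_deriv_eq_derivative[OF has_derivative_mult[OF F G]]
    by (simp add: partial_deriv_eq_derivative[OF F] partial_deriv_eq_derivative[OF G])
qed

definition gaussian_mgf :: "real^'n::finite \<Rightarrow> real^'n^'n \<Rightarrow> real^'n \<Rightarrow> real" where
  "gaussian_mgf m S u = exp (u \<bullet> m + (1/2) * (u \<bullet> (S *v u)))"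

lemma mgf_eq_mixture:
  "mgf ((m1, m2), (l1, l2), S) = (\<lambda>u. l1 * gaussian_mgf m1 S u + l2 * gaussian_mgf m2 S u)"
  by (simp add: mgf_def gaussian_mgf_def fun_eq_iff)

lemma has_derivative_gaussian_mgf:
  "(gaussian_mgf m S has_derivative
     (\<lambda>h. gaussian_mgf m S u * (h \<bullet> m + (1/2) * (h \<bullet> (S *v u) + u \<bullet> (S *v h))))) (at u)"
  unfolding gaussian_mgf_def
  by (auto intro!: derivative_eq_intros bounded_linear_imp_has_derivative
      simp: matrix_vector_right_distrib algebra_simps)

lemma has_derivative_affine_component:
  fixes S :: "real^'n::finite^'n"
  shows "((\<lambda>u. m $ l + (S *v u) $ l) has_derivative (\<lambda>h. (S *v h) $ l)) (at u)"
proof -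
  have "bounded_linear (\<lambda>h. (S *v h) $ l)"
    using bounded_linear_compose[OF bounded_linear_vec_nth matrix_vector_mul_bounded_linear, of S l]
    by (simp add: o_def)
  then show ?thesis
    by (auto intro!: derivative_eq_intros bounded_linear_imp_has_derivative)
qed

lemma gaussian_mgf_differentiable [simp]: "gaussian_mgf m S differentiable at u"
  using has_derivative_gaussian_mgf differentiable_def by blast

lemma affine_component_differentiable [simp]:
  fixes S :: "real^'n::finite^'n"
  shows "(\<lambda>u. m $ l + (S *v u) $ l) differentiable at u"
  using has_derivative_affine_component differentiable_def by blast

lemma partial_deriv_affine_component [simp]:
  fixes S :: "real^'n::finite^'n"
  shows "partial_deriv j (\<lambda>u. m $ l + (S *v u) $ l) u = S $ l $ j"
  by (simp add: partial_deriv_eq_derivative[OF has_derivative_affine_component]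
      matrix_vector_mult_basis column_def)

lemma transpose_eq_self_iff: "transpose S = S \<longleftrightarrow> (\<forall>i j. S $ i $ j = S $ j $ i)"
  by (auto simp: transpose_def vec_eq_iff)

lemma inner_symmetric_matrix_axis:
  assumes "transpose S = S"
  shows "u \<bullet> (S *v axis j 1) = (S *v u) $ j"
proof -
  have "u \<bullet> (S *v axis j 1) = (\<Sum>i\<in>UNIV. u $ i * S $ i $ j)"
    by (simp add: matrix_vector_mult_basis column_def inner_vec_def)
  also have "\<dots> = (\<Sum>i\<in>UNIV. S $ j $ i * u $ i)"
    using assms by (simp add: transpose_eq_self_iff mult.commute)
  finally show ?thesis by (simp add: matrix_vector_mult_def)
qed

lemma partial_deriv_gaussian_mgf [simp]:
  assumes "transpose S = S"
  shows "partial_deriv j (gaussian_mgf m S) u = (m $ j + (S *v u) $ j) * gaussian_mgf m S u"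
  by (simp add: partial_deriv_eq_derivative[OF has_derivative_gaussian_mgf]
      inner_symmetric_matrix_axis[OF assms] cart_eq_inner_axis inner_commute)

lemma gaussian_mgf_0 [simp]: "gaussian_mgf m S 0 = 1"
  by (simp add: gaussian_mgf_def)

text \<open>Raw moments of \<open>N(m, S)\<close> (Isserlis' formula).\<close>

definition gaussian_moment2 :: "real^'n::finite \<Rightarrow> real^'n^'n \<Rightarrow> 'n \<Rightarrow> 'n \<Rightarrow> real" where
  "gaussian_moment2 m S i j = m$i * m$j + S$i$j"

definition gaussian_moment3 :: "real^'n::finite \<Rightarrow> real^'n^'n \<Rightarrow> 'n \<Rightarrow> 'n \<Rightarrow> 'n \<Rightarrow> real" where
  "gaussian_moment3 m S i j k = m$i * m$j * m$k + S$i$j * m$k + S$i$k * m$j + S$j$k * m$i"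

definition gaussian_moment4 :: "real^'n::finite \<Rightarrow> real^'n^'n \<Rightarrow> 'n \<Rightarrow> 'n \<Rightarrow> 'n \<Rightarrow> 'n \<Rightarrow> real" where
  "gaussian_moment4 m S i j k l =
     m$i * m$j * m$k * m$l
   + S$i$j * m$k * m$l + S$i$k * m$j * m$l + S$i$l * m$j * m$k
   + S$j$k * m$i * m$l + S$j$l * m$i * m$k + S$k$l * m$i * m$j
   + S$i$j * S$k$l + S$i$k * S$j$l + S$i$l * S$j$k"

definition cumulant2 :: "('n list \<Rightarrow> real) \<Rightarrow> 'n \<Rightarrow> 'n \<Rightarrow> real" where
  "cumulant2 M i j = M [i,j] - M [i] * M [j]"

definition cumulant3 :: "('n list \<Rightarrow> real) \<Rightarrow> 'n \<Rightarrow> 'n \<Rightarrow> 'n \<Rightarrow> real" where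
  "cumulant3 M i j k =
     M [i,j,k] - M [i] * M [j,k] - M [j] * M [i,k] - M [k] * M [i,j] + 2 * M [i] * M [j] * M [k]"

definition marginal_cumulant4 :: "('n list \<Rightarrow> real) \<Rightarrow> 'n \<Rightarrow> real" where
  "marginal_cumulant4 M a =
     M [a,a,a,a] - 4 * M [a,a,a] * M [a] - 3 * (M [a,a])\<^sup>2 + 12 * M [a,a] * (M [a])\<^sup>2 - 6 * (M [a])^4"

context
  fixes S :: "real^'n::finite^'n"
  assumes S: "transpose S = S"
begin

lemma symmetric_entry: "S $ i $ j = S $ j $ i"
  using S by (simp add: transpose_eq_self_iff)

text \<open>Ring normalisation may only start once the derivatives are evaluated: it would break up
  the factors \<open>m $ j + (S *v u) $ j\<close> that the derivative rules match on.\<close>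

lemma M4_mixture_order1: "M4 ((m1, m2), (l1, l2), S) [i] = l1 * m1$i + l2 * m2$i"
  by (simp add: M4_def mgf_eq_mixture pd_Cons_partial_deriv S del: pd.simps(2))

lemma M4_mixture_order2:
  "M4 ((m1, m2), (l1, l2), S) [i,j] = l1 * gaussian_moment2 m1 S i j + l2 * gaussian_moment2 m2 S i j"
  by (simp add: M4_def mgf_eq_mixture pd_Cons_partial_deriv S del: pd.simps(2))
    (simp add: gaussian_moment2_def symmetric_entry algebra_simps)

lemma M4_mixture_order3:
  "M4 ((m1, m2), (l1, l2), S) [i,j,k] = l1 * gaussian_moment3 m1 S i j k + l2 * gaussian_moment3 m2 S i j k"
  by (simp add: M4_def mgf_eq_mixture pd_Cons_partial_deriv S del: pd.simps(2))
    (simp add: gaussian_moment3_def symmetric_entry algebra_simps)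

lemma M4_mixture_order4:
  "M4 ((m1, m2), (l1, l2), S) [i,j,k,l] =
     l1 * gaussian_moment4 m1 S i j k l + l2 * gaussian_moment4 m2 S i j k l"
  by (simp add: M4_def mgf_eq_mixture pd_Cons_partial_deriv S del: pd.simps(2))
    (simp add: gaussian_moment4_def symmetric_entry algebra_simps)

context
  fixes l1 l2 :: real
  assumes weights_sum: "l1 + l2 = 1"
begin

lemma mixture_cumulant2:
  "cumulant2 (M4 ((m1, m2), (l1, l2), S)) i j = S$i$j + l1 * l2 * (m1$i - m2$i) * (m1$j - m2$j)"
  using weights_sum unfolding cumulant2_def M4_mixture_order1 M4_mixture_order2 gaussian_moment2_def
  by algebra

lemma mixture_cumulant3:
  "cumulant3 (M4 ((m1, m2), (l1, l2), S)) i j k =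
     l1 * l2 * (l2 - l1) * (m1$i - m2$i) * (m1$j - m2$j) * (m1$k - m2$k)"
  using weights_sum
  unfolding cumulant3_def M4_mixture_order1 M4_mixture_order2 M4_mixture_order3
    gaussian_moment2_def gaussian_moment3_def
  by algebra

lemma mixture_marginal_cumulant4:
  "marginal_cumulant4 (M4 ((m1, m2), (l1, l2), S)) a = l1 * l2 * (1 - 6 * l1 * l2) * (m1$a - m2$a)^4"
  using weights_sum
  unfolding marginal_cumulant4_def M4_mixture_order1 M4_mixture_order2 M4_mixture_order3
    M4_mixture_order4 gaussian_moment2_def gaussian_moment3_def gaussian_moment4_def
  by algebra

end

end

lemma cubic_ratio_injective:
  fixes y y' :: real
  assumes y: "-1 < y" "y < 2" and y': "-1 < y'" "y' < 2"
    and eq: "y^3 * ((2 - y') * (1 + y')\<^sup>2) = y'^3 * ((2 - y) * (1 + y)\<^sup>2)"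
  shows "y = y'"
proof -
  have pos: "(2 - y) * (1 + y)\<^sup>2 > 0" "(2 - y') * (1 + y')\<^sup>2 > 0"
    using y y' by simp_all
  have sign: "(0 < t^3 * c \<longleftrightarrow> 0 < t) \<and> (t^3 * c < 0 \<longleftrightarrow> t < 0)" if "c > 0" for t c :: real
    using that by (simp add: zero_less_mult_iff mult_less_0_iff zero_less_power_eq power_less_zero_eq)
  have same_sign: "0 < y \<longleftrightarrow> 0 < y'" "y < 0 \<longleftrightarrow> y' < 0"
    using sign[OF pos(1), of y'] sign[OF pos(2), of y] eq by auto
  define Q where "Q = 2 * (y\<^sup>2 + y * y' + y'\<^sup>2) + 3 * y * y' * (y + y')"
  have factor: "y^3 * ((2 - y') * (1 + y')\<^sup>2) - y'^3 * ((2 - y) * (1 + y)\<^sup>2) = (y - y') * Q"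
    unfolding Q_def by algebra
  consider "y = 0" | "0 < y" "0 < y'" | "y < 0" "y' < 0"
    using same_sign by linarith
  then show ?thesis
  proof cases
    case 1
    then show ?thesis using same_sign by linarith
  next
    case 2
    then have "Q > 0" unfolding Q_def by (simp add: add_pos_pos)
    then show ?thesis using factor eq by simp
  next
    case 3
    have "y * y' > 0" using 3 by (simp add: mult_neg_neg)
    then have "3 * (y * y') * (y + y') > 3 * (y * y') * (-2)"
      using y y' by (intro mult_strict_left_mono) auto
    then have "Q > 2 * (y - y')\<^sup>2"
      unfolding Q_def by (simp add: power2_eq_square algebra_simps)
    then have "Q > 0" using zero_le_power2[of "y - y'"] by linarith
    then show ?thesis using factor eq by simp
  qed
qed

lemma real_cube_eq_iff: "x^3 = y^3 \<longleftrightarrow> x = (y::real)"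
  by (metis odd_real_root_power_cancel odd_numeral)

text \<open>With \<open>y\<close> as below, \<open>\<lambda>\<^sub>1\<lambda>\<^sub>2 = (2 - y)/12\<close>, \<open>(\<lambda>\<^sub>2 - \<lambda>\<^sub>1)\<^sup>2 = (1 + y)/3\<close> and
  \<open>1 - 6\<lambda>\<^sub>1\<lambda>\<^sub>2 = y/2\<close>; the identity eliminates \<open>x\<close> from the two cumulants.\<close>

lemma two_point_cumulant_relation:
  fixes l1 l2 x :: real
  assumes "l1 + l2 = 1"
  defines "y \<equiv> 3 * (l2 - l1)\<^sup>2 - 1"
  shows "27 * (l1 * l2 * (l2 - l1) * x^3)^4 * y^3
           = 2 * (l1 * l2 * (1 - 6 * l1 * l2) * x^4)^3 * ((2 - y) * (1 + y)\<^sup>2)"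
  using assms by algebra

lemma two_point_cumulants_determine_spread:
  fixes l1 l2 l1' l2' x x' :: real
  assumes sums: "l1 + l2 = 1" "l1' + l2' = 1"
    and weights: "0 < l1" "l1 < 1" "0 < l1'" "l1' < 1"
    and nondeg: "(l2 - l1) * x \<noteq> 0"
    and k3: "l1 * l2 * (l2 - l1) * x^3 = l1' * l2' * (l2' - l1') * x'^3"
    and k4: "l1 * l2 * (1 - 6 * l1 * l2) * x^4 = l1' * l2' * (1 - 6 * l1' * l2') * x'^4"
  shows "(l2' - l1')\<^sup>2 = (l2 - l1)\<^sup>2"
proof -
  define r r' where "r = l2 - l1" and "r' = l2' - l1'"
  define y y' where "y = 3 * r\<^sup>2 - 1" and "y' = 3 * r'\<^sup>2 - 1"
  define c3 c4 where "c3 = l1 * l2 * (l2 - l1) * x^3" and "c4 = l1 * l2 * (1 - 6 * l1 * l2) * x^4"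
  have "c3 \<noteq> 0"
    using weights sums nondeg unfolding c3_def by simp
  then have "r' \<noteq> 0"
    using k3 unfolding c3_def r'_def by auto
  have "r \<noteq> 0"
    using nondeg unfolding r_def by simp
  have "r\<^sup>2 < 1" "r'\<^sup>2 < 1"
    using weights sums unfolding r_def r'_def by (simp_all add: abs_square_less_1)
  then have y_range: "-1 < y" "y < 2" "-1 < y'" "y' < 2"
    using \<open>r \<noteq> 0\<close> \<open>r' \<noteq> 0\<close> unfolding y_def y'_def by auto
  have "27 * c3^4 * y^3 = 2 * c4^3 * ((2 - y) * (1 + y)\<^sup>2)"
    unfolding c3_def c4_def y_def r_def by (rule two_point_cumulant_relation[OF sums(1)])
  moreover have "27 * c3^4 * y'^3 = 2 * c4^3 * ((2 - y') * (1 + y')\<^sup>2)"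
    unfolding c3_def c4_def k3 k4 y'_def r'_def by (rule two_point_cumulant_relation[OF sums(2)])
  ultimately have "27 * c3^4 * (y^3 * ((2 - y') * (1 + y')\<^sup>2) - y'^3 * ((2 - y) * (1 + y)\<^sup>2)) = 0"
    by algebra
  then have "y = y'"
    using cubic_ratio_injective y_range \<open>c3 \<noteq> 0\<close> by simp
  then show ?thesis
    unfolding y_def y'_def r_def r'_def by simp
qed

lemma two_point_cumulants_determine:
  fixes l1 l2 l1' l2' x x' :: real
  assumes sums: "l1 + l2 = 1" "l1' + l2' = 1"
    and weights: "0 < l1" "l1 < 1" "0 < l1'" "l1' < 1"
    and nondeg: "(l2 - l1) * x \<noteq> 0"
    and k3: "l1 * l2 * (l2 - l1) * x^3 = l1' * l2' * (l2' - l1') * x'^3"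
    and k4: "l1 * l2 * (1 - 6 * l1 * l2) * x^4 = l1' * l2' * (1 - 6 * l1' * l2') * x'^4"
  shows "(l1' = l1 \<and> l2' = l2 \<and> x' = x) \<or> (l1' = l2 \<and> l2' = l1 \<and> x' = -x)"
proof -
  define r r' where "r = l2 - l1" and "r' = l2' - l1'"
  have spread: "r'\<^sup>2 = r\<^sup>2"
    unfolding r_def r'_def by (rule two_point_cumulants_determine_spread[OF assms])
  then have "l1' * l2' = l1 * l2"
    using sums unfolding r_def r'_def by algebra
  then have cube: "r * x^3 = r' * x'^3"
    using k3 weights sums unfolding r_def r'_def by simp
  have "r \<noteq> 0"
    using nondeg unfolding r_def by simp
  from spread consider "r' = r" | "r' = -r"
    by (metis power2_eq_iff)
  then show ?thesis
  proof cases
    case 1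
    then have "x' = x"
      using cube \<open>r \<noteq> 0\<close> by (simp add: real_cube_eq_iff)
    moreover have "l1' = l1"
      using 1 sums unfolding r_def r'_def by simp
    ultimately show ?thesis using sums by simp
  next
    case 2
    then have "r * (x'^3 - (-x)^3) = 0"
      using cube by (simp add: algebra_simps)
    then have "x'^3 = (-x)^3"
      using \<open>r \<noteq> 0\<close> by simp
    then have "x' = -x"
      by (simp only: real_cube_eq_iff)
    moreover have "l1' = l2"
      using 2 sums unfolding r_def r'_def by simp
    ultimately show ?thesis using sums by simp
  qed
qed

lemma param_polys_diff:
  "p \<in> param_polys \<Longrightarrow> q \<in> param_polys \<Longrightarrow> (\<lambda>\<theta>. p \<theta> - q \<theta>) \<in> param_polys"
  using param_polys.padd[OF _ param_polys.pmult[OF param_polys.pconst[of "-1"]], of p q] by simp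

definition nondegeneracy_poly :: "'n::finite \<Rightarrow> 'n param \<Rightarrow> real" where
  "nondegeneracy_poly a \<theta> = (case \<theta> of ((m1, m2), (l1, l2), S) \<Rightarrow> (l2 - l1) * (m1 $ a - m2 $ a))"

lemma nondegeneracy_poly_in_param_polys: "nondegeneracy_poly a \<in> param_polys"
proof -
  have "nondegeneracy_poly a =
      (\<lambda>\<theta>. (snd (fst (snd \<theta>)) - fst (fst (snd \<theta>))) * (fst (fst \<theta>) $ a - snd (fst \<theta>) $ a))"
    by (auto simp: fun_eq_iff nondegeneracy_poly_def split: prod.split)
  then show ?thesis
    by (simp add: param_polys.intros param_polys_diff)
qed

lemma M4_swap_param [simp]: "M4 (swap_param \<theta>) = M4 \<theta>"
proof -
  have "mgf (swap_param \<theta>) = mgf \<theta>"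
    by (auto simp: fun_eq_iff mgf_def swap_param_def split: prod.split)
  then show ?thesis
    unfolding M4_def by metis
qed

lemma mixture_eq_of_M4_eq_same_weights:
  assumes "((m1, m2), (l1, l2), S) \<in> ThetaH" "((n1, n2), (l1, l2), T) \<in> ThetaH"
    and nondeg: "l1 * l2 * (l2 - l1) * (m1 $ a - m2 $ a) \<noteq> 0"
    and offset: "n1 $ a - n2 $ a = m1 $ a - m2 $ a"
    and M: "M4 ((m1, m2), (l1, l2), S) = M4 ((n1, n2), (l1, l2), T)"
  shows "((n1, n2), (l1, l2), T) = ((m1, m2), (l1, l2), S)"
proof -
  have sum: "l1 + l2 = 1" and S: "transpose S = S" and T: "transpose T = T"
    using assms(1,2) by (auto simp: ThetaH_def)
  have offsets: "n1 $ j - n2 $ j = m1 $ j - m2 $ j" for j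
    using arg_cong[OF M, of "\<lambda>M. cumulant3 M a a j"] nondeg offset
    by (simp add: mixture_cumulant3[OF S sum] mixture_cumulant3[OF T sum])
  have mean: "l1 * m1 $ j + l2 * m2 $ j = l1 * n1 $ j + l2 * n2 $ j" for j
    using arg_cong[OF M, of "\<lambda>M. M [j]"]
    by (simp add: M4_mixture_order1[OF S] M4_mixture_order1[OF T])
  have "n1 $ j = m1 $ j" "n2 $ j = m2 $ j" for j
    using mean[of j] offsets[of j] sum by algebra+
  then have means: "n1 = m1" "n2 = m2"
    by (simp_all add: vec_eq_iff)
  have "T $ i $ j = S $ i $ j" for i j
    using arg_cong[OF M, of "\<lambda>M. cumulant2 M i j"]
    by (simp add: mixture_cumulant2[OF S sum] mixture_cumulant2[OF T sum] means)
  then have "T = S"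
    by (simp add: vec_eq_iff)
  with means show ?thesis
    by simp
qed

lemma mixture_identifiable_from_M4:
  fixes \<theta> \<theta>' :: "'n::finite param"
  assumes "\<theta> \<in> ThetaH" "\<theta>' \<in> ThetaH" "weights_in_01 \<theta>" "weights_in_01 \<theta>'"
    and "nondegeneracy_poly a \<theta> \<noteq> 0" and "M4 \<theta> = M4 \<theta>'"
  shows "\<theta>' = \<theta> \<or> \<theta>' = swap_param \<theta>"
proof -
  obtain m1 m2 l1 l2 S where \<theta>: "\<theta> = ((m1, m2), (l1, l2), S)"
    by (metis prod.exhaust)
  obtain n1 n2 k1 k2 T where \<theta>': "\<theta>' = ((n1, n2), (k1, k2), T)"
    by (metis prod.exhaust)
  have S: "transpose S = S" "l1 + l2 = 1" and T: "transpose T = T" "k1 + k2 = 1"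
    using assms(1,2) by (auto simp: \<theta> \<theta>' ThetaH_def)
  have weights: "0 < l1" "l1 < 1" "0 < k1" "k1 < 1"
    using assms(3,4) by (auto simp: \<theta> \<theta>' weights_in_01_def)
  define x x' where "x = m1 $ a - m2 $ a" and "x' = n1 $ a - n2 $ a"
  have nondeg: "(l2 - l1) * x \<noteq> 0"
    using assms(5) by (simp add: \<theta> x_def nondegeneracy_poly_def)
  have M: "M4 ((m1, m2), (l1, l2), S) = M4 ((n1, n2), (k1, k2), T)"
    using assms(6) by (simp add: \<theta> \<theta>')
  have k3: "l1 * l2 * (l2 - l1) * x^3 = k1 * k2 * (k2 - k1) * x'^3"
    using arg_cong[OF M, of "\<lambda>M. cumulant3 M a a a"]
    by (simp add: mixture_cumulant3[OF S] mixture_cumulant3[OF T] x_def x'_def power3_eq_cube mult.assoc)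
  have k4: "l1 * l2 * (1 - 6 * l1 * l2) * x^4 = k1 * k2 * (1 - 6 * k1 * k2) * x'^4"
    using arg_cong[OF M, of "\<lambda>M. marginal_cumulant4 M a"]
    by (simp add: mixture_marginal_cumulant4[OF S] mixture_marginal_cumulant4[OF T] x_def x'_def)
  have nondeg': "l1 * l2 * (l2 - l1) * (m1 $ a - m2 $ a) \<noteq> 0"
    using nondeg weights S(2) by (simp add: x_def)
  from two_point_cumulants_determine[OF S(2) T(2) weights nondeg k3 k4]
  show ?thesis
  proof
    assume "k1 = l1 \<and> k2 = l2 \<and> x' = x"
    then have "\<theta>' = \<theta>"
      using mixture_eq_of_M4_eq_same_weights[of m1 m2 l1 l2 S n1 n2 T a] assms(1,2) nondeg' M
      by (simp add: \<theta> \<theta>' x_def x'_def)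
    then show ?thesis ..
  next
    assume "k1 = l2 \<and> k2 = l1 \<and> x' = -x"
    then have "swap_param \<theta>' = \<theta>"
      using mixture_eq_of_M4_eq_same_weights[of m1 m2 l1 l2 S n2 n1 T a] assms(1,2) nondeg' M
        M4_swap_param[of \<theta>']
      by (simp add: \<theta> \<theta>' x_def x'_def swap_param_def ThetaH_def)
    then show ?thesis
      by (auto simp: \<theta>' swap_param_def)
  qed
qed

theorem corollary4p11:
  "\<exists>p :: ('n::finite) param \<Rightarrow> real.
     p \<in> param_polys \<and> (\<exists>\<theta>\<in>ThetaH. p \<theta> \<noteq> 0) \<and>
     (\<forall>\<theta>\<in>ThetaH. \<forall>\<theta>'\<in>ThetaH.
        p \<theta> \<noteq> 0 \<longrightarrow> weights_in_01 \<theta> \<longrightarrow> weights_in_01 \<theta>' \<longrightarrow>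
        M4 \<theta> = M4 \<theta>' \<longrightarrow> \<theta>' = \<theta> \<or> \<theta>' = swap_param \<theta>)"
proof -
  obtain a :: 'n where True
    by blast
  have "((axis a 1, 0), (1/4, 3/4), 0) \<in> (ThetaH :: 'n param set)"
    by (simp add: ThetaH_def transpose_def vec_eq_iff)
  moreover have "nondegeneracy_poly a ((axis a 1, 0), (1/4, 3/4), 0) \<noteq> 0"
    by (simp add: nondegeneracy_poly_def)
  ultimately show ?thesis
    using nondegeneracy_poly_in_param_polys mixture_identifiable_from_M4 by blast
qed

end
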